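(* Consider an instance of $\mathrm{BAL}(\mu,\nu)$. Let $\ell\in\{1,\dots,\nu-1\}$ and $\mathcal S\subseteq\hat V$ with $|\mathcal S|\le k-(\nu-\ell)$, and let $U=\{\tau\subseteq\hat V:|\tau|=\nu-\ell\}$. Then $\tau^*=\arg\max\{\Phi^{\ge\ell}(\mathcal S\cup\tau):\tau\in U\}$ satisfies \[ \Phi^{\ge\ell}(\mathcal S\cup\tau^* )-\Phi^{\ge\ell}(\mathcal S)\ \ge\ \frac{\Phi^{\ge\ell}(\mathcal S^*_{\ge\ell})-\Phi^{\ge\ell}(\mathcal S)}{\binom{k}{\nu-\ell}}, \] where $\mathcal S^*_{\ge\ell}$ is an optimal solution of size $k$ to maximizing $\Phi^{\ge\ell}$.
   Context: Triggering model: for a directed graph $G=(V,E)$ and $p:E\to[0,1]$, an outcome $X=(T_v)_{v\in V}$ is obtained by having each node $v$ independently choose a subset $T_v$ of its in-neighbours $N_v$, with $T_v=S$ with probability $\prod_{u\in S}p_{uv}\prod_{u\in N_v\setminus S}(1-p_{uv})$; $\rho_X(A)$ is the set of nodes reachable from $A\subseteq V$ via arcs $\{(u,v):u\in T_v\}$. $\mathrm{BAL}(\mu,\nu)$ for integer constants $\mu\ge\nu\ge2$: instance = directed graph $G=(V,E)$, probability functions $p_1,\dots,p_\mu:E\to[0,1]$, seed sets $\mathcal I=(I_1,\dots,I_\mu)$, budget $k\ge2$. Let $\hat V=V\times[\mu]$; a set $\mathcal S\subseteq\hat V$ is identified with $(S_1,\dots,S_\mu)$, $S_i=\{v:(v,i)\in\mathcal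 S\}$. An outcome profile $\mathcal X=(X_1,\dots,X_\mu)$ consists of outcomes $X_i$ w.r.t. $p_i$ (independent in the heterogeneous setting; in the correlated setting all $p_i$ are equal and $X_1=\dots=X_\mu$). Campaign $i$ reaches $v$ from seeds $A_i$ if $v\in\rho_{X_i}(A_i)$. $V^j_{\mathcal X}$ is the set of nodes reached by exactly $j$ campaigns from seeds $\mathcal I$. For $\ell\ge0$, $\Phi^{\ge\ell}(\mathcal S)$ is the expected number (over $\mathcal X$) of nodes $v\notin\bigcup_{j<\ell}V^j_{\mathcal X}$ reached by none or by at least $\nu$ campaigns from seeds $(I_i\cup S_i)_i$. *)

theory Defs
  imports Complex_Main "HOL-Library.FuncSet"
begin

definition innbrs :: "('a \<times> 'a) set \<Rightarrow> 'a \<Rightarrow> 'a set" where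
  "innbrs E v = {u. (u, v) \<in> E}"

definition outcomes :: "'a set \<Rightarrow> ('a \<times> 'a) set \<Rightarrow> ('a \<Rightarrow> 'a set) set" where
  "outcomes V E = (\<Pi>\<^sub>E v\<in>V. Pow (innbrs E v))"

definition outcome_prob :: "'a set \<Rightarrow> ('a \<times> 'a) set \<Rightarrow> ('a \<times> 'a \<Rightarrow> real) \<Rightarrow> ('a \<Rightarrow> 'a set) \<Rightarrow> real" where
  "outcome_prob V E q T =
     (\<Prod>v\<in>V. (\<Prod>u\<in>T v. q (u, v)) * (\<Prod>u\<in>innbrs E v - T v. 1 - q (u, v)))"

definition live_arcs :: "'a set \<Rightarrow> ('a \<Rightarrow> 'a set) \<Rightarrow> ('a \<times> 'a) set" where
  "live_arcs V T = {(u, w). w \<in> V \<and> u \<in> T w}"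

definition reach :: "'a set \<Rightarrow> ('a \<Rightarrow> 'a set) \<Rightarrow> 'a set \<Rightarrow> 'a set" where
  "reach V T A = {w. \<exists>a\<in>A. (a, w) \<in> (live_arcs V T)\<^sup>*}"

definition nreach :: "'a set \<Rightarrow> nat \<Rightarrow> (nat \<Rightarrow> 'a \<Rightarrow> 'a set) \<Rightarrow> (nat \<Rightarrow> 'a set) \<Rightarrow> 'a \<Rightarrow> nat" where
  "nreach V mu Xs A v = card {i\<in>{1..mu}. v \<in> reach V (Xs i) (A i)}"

definition Vj :: "'a set \<Rightarrow> nat \<Rightarrow> (nat \<Rightarrow> 'a \<Rightarrow> 'a set) \<Rightarrow> (nat \<Rightarrow> 'a set) \<Rightarrow> nat \<Rightarrow> 'a set" where
  "Vj V mu Xs I j = {v\<in>V. nreach V mu Xs I v = j}"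

definition Vhat :: "'a set \<Rightarrow> nat \<Rightarrow> ('a \<times> nat) set" where
  "Vhat V mu = V \<times> {1..mu}"

definition slice :: "('a \<times> nat) set \<Rightarrow> nat \<Rightarrow> 'a set" where
  "slice S i = {v. (v, i) \<in> S}"

definition phi_outcome ::
  "'a set \<Rightarrow> nat \<Rightarrow> nat \<Rightarrow> (nat \<Rightarrow> 'a set) \<Rightarrow> nat \<Rightarrow> ('a \<times> nat) set \<Rightarrow> (nat \<Rightarrow> 'a \<Rightarrow> 'a set) \<Rightarrow> nat" where
  "phi_outcome V mu nu I l S Xs =
     card {v\<in>V. v \<notin> (\<Union>j\<in>{..<l}. Vj V mu Xs I j) \<and>
                 (nreach V mu Xs (\<lambda>i. I i \<union> slice S i) v = 0 \<or>
                  nreach V mu Xs (\<lambda>i. I i \<union> slice S i) v \<ge> nu)}"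

text \<open>Heterogeneous setting (corr = False): independent
  outcomes X_i w.r.t. p_i. Correlated setting (corr = True): one outcome X w.r.t. p_1 shared
  by all campaigns (in that setting all p_i are assumed equal).\<close>
definition expect_profile ::
  "bool \<Rightarrow> 'a set \<Rightarrow> ('a \<times> 'a) set \<Rightarrow> nat \<Rightarrow> (nat \<Rightarrow> 'a \<times> 'a \<Rightarrow> real) \<Rightarrow>
   ((nat \<Rightarrow> 'a \<Rightarrow> 'a set) \<Rightarrow> real) \<Rightarrow> real" where
  "expect_profile corr V E mu p f =
     (if corr then
        (\<Sum>X\<in>outcomes V E. outcome_prob V E (p 1) X * f (\<lambda>i. X))
      else
        (\<Sum>Xs\<in>(\<Pi>\<^sub>E i\<in>{1..mu}. outcomes V E).
            (\<Prod>i\<in>{1..mu}. outcome_prob V E (p i) (Xs i)) * f Xs))"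

definition Phi_ge ::
  "bool \<Rightarrow> 'a set \<Rightarrow> ('a \<times> 'a) set \<Rightarrow> nat \<Rightarrow> nat \<Rightarrow> (nat \<Rightarrow> 'a \<times> 'a \<Rightarrow> real) \<Rightarrow>
   (nat \<Rightarrow> 'a set) \<Rightarrow> nat \<Rightarrow> ('a \<times> nat) set \<Rightarrow> real" where
  "Phi_ge corr V E mu nu p I l S =
     expect_profile corr V E mu p (\<lambda>Xs. real (phi_outcome V mu nu I l S Xs))"

definition BAL_instance ::
  "bool \<Rightarrow> nat \<Rightarrow> nat \<Rightarrow> 'a set \<Rightarrow> ('a \<times> 'a) set \<Rightarrow> (nat \<Rightarrow> 'a \<times> 'a \<Rightarrow> real) \<Rightarrow>
   (nat \<Rightarrow> 'a set) \<Rightarrow> nat \<Rightarrow> bool" where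
  "BAL_instance corr mu nu V E p I k \<longleftrightarrow>
     2 \<le> nu \<and> nu \<le> mu \<and> 2 \<le> k \<and> finite V \<and> E \<subseteq> V \<times> V \<and>
     (\<forall>i\<in>{1..mu}. \<forall>e\<in>E. 0 \<le> p i e \<and> p i e \<le> 1) \<and>
     (\<forall>i\<in>{1..mu}. I i \<subseteq> V) \<and>
     (corr \<longrightarrow> (\<forall>i\<in>{1..mu}. \<forall>e\<in>E. p i e = p 1 e))"

end

theory Submission
  imports Defs
begin

text \<open>Fix an outcome profile. Because \<open>l \<ge> 1\<close>, a node counted by \<open>\<Phi>\<^sup>\<ge>\<^sup>l(A)\<close> is one reached
  by at least \<open>l\<close> campaigns from \<open>I\<close> and by at least \<open>\<nu>\<close> campaigns from the seeds \<open>I \<union> A\<close>.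
  If it is counted for a \<open>k\<close>-set \<open>S\<^sup>*\<close>, then choosing, for \<open>\<nu> - l\<close> of the campaigns that reach
  it only through \<open>S\<^sup>*\<close>, a seed of \<open>S\<^sup>*\<close> that reaches it yields a \<open>(\<nu> - l)\<close>-subset \<open>\<tau>\<close> of
  \<open>S\<^sup>*\<close> for which it is counted as well. So the gain of \<open>S\<^sup>*\<close> over \<open>S\<close> is at most the sum of
  the gains of the \<open>k choose (\<nu> - l)\<close> sets \<open>S \<union> \<tau>\<close>: pointwise, and then, by linearity and
  monotonicity of the expectation, for \<open>\<Phi>\<^sup>\<ge>\<^sup>l\<close> itself. Each summand is at most the gain of
  \<open>S \<union> \<tau>\<^sup>*\<close>.\<close>

lemma outcome_prob_nonneg:
  assumes q: "\<forall>e\<in>E. 0 \<le> q e \<and> q e \<le> 1" and T: "T \<in> outcomes V E"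
  shows "0 \<le> outcome_prob V E q T"
  unfolding outcome_prob_def
proof (rule prod_nonneg, rule mult_nonneg_nonneg)
  fix v assume "v \<in> V"
  with T have "T v \<subseteq> innbrs E v" unfolding outcomes_def by auto
  with q show "0 \<le> (\<Prod>u\<in>T v. q (u, v))"
    by (intro prod_nonneg) (auto simp: innbrs_def)
  from q show "0 \<le> (\<Prod>u\<in>innbrs E v - T v. 1 - q (u, v))"
    by (intro prod_nonneg) (auto simp: innbrs_def)
qed

lemma expect_profile_mono:
  assumes p: "\<forall>i\<in>{1..mu}. \<forall>e\<in>E. 0 \<le> p i e \<and> p i e \<le> 1" and "1 \<le> mu"
    and le: "\<And>Xs. f Xs \<le> g Xs"
  shows "expect_profile corr V E mu p f \<le> expect_profile corr V E mu p g"
proof (cases corr)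
  case True
  from p \<open>1 \<le> mu\<close> have "\<forall>e\<in>E. 0 \<le> p 1 e \<and> p 1 e \<le> 1" by auto
  with True show ?thesis unfolding expect_profile_def if_P[OF True]
    by (intro sum_mono mult_left_mono le outcome_prob_nonneg)
next
  case False
  with p show ?thesis unfolding expect_profile_def
    by (auto intro!: sum_mono mult_left_mono le prod_nonneg outcome_prob_nonneg simp: PiE_iff)
qed

lemma expect_profile_diff:
  "expect_profile corr V E mu p (\<lambda>Xs. f Xs - g Xs)
     = expect_profile corr V E mu p f - expect_profile corr V E mu p g"
  unfolding expect_profile_def by (simp add: right_diff_distrib sum_subtractf)

lemma expect_profile_sum:
  "expect_profile corr V E mu p (\<lambda>Xs. \<Sum>t\<in>T. f t Xs) = (\<Sum>t\<in>T. expect_profile corr V E mu p (f t))"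
  unfolding expect_profile_def by (simp add: sum_distrib_left sum.swap[of _ T])

lemma reach_mono: "A \<subseteq> B \<Longrightarrow> reach V T A \<subseteq> reach V T B"
  unfolding reach_def by auto

lemma reach_Un: "reach V T (A \<union> B) = reach V T A \<union> reach V T B"
  unfolding reach_def by auto

definition reaching_campaigns ::
  "'a set \<Rightarrow> nat \<Rightarrow> (nat \<Rightarrow> 'a \<Rightarrow> 'a set) \<Rightarrow> (nat \<Rightarrow> 'a set) \<Rightarrow> 'a \<Rightarrow> nat set" where
  "reaching_campaigns V mu Xs A v = {i\<in>{1..mu}. v \<in> reach V (Xs i) (A i)}"

lemma nreach_eq_card_reaching_campaigns:
  "nreach V mu Xs A v = card (reaching_campaigns V mu Xs A v)"
  unfolding nreach_def reaching_campaigns_def ..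

lemma reaching_campaigns_mono:
  "(\<And>i. A i \<subseteq> B i) \<Longrightarrow> reaching_campaigns V mu Xs A v \<subseteq> reaching_campaigns V mu Xs B v"
  unfolding reaching_campaigns_def using reach_mono by blast

lemma nreach_mono: "(\<And>i. A i \<subseteq> B i) \<Longrightarrow> nreach V mu Xs A v \<le> nreach V mu Xs B v"
  unfolding nreach_eq_card_reaching_campaigns
  by (intro card_mono reaching_campaigns_mono) (simp_all add: reaching_campaigns_def)

abbreviation seeds_with :: "(nat \<Rightarrow> 'a set) \<Rightarrow> ('a \<times> nat) set \<Rightarrow> nat \<Rightarrow> 'a set" where
  "seeds_with I S \<equiv> \<lambda>i. I i \<union> slice S i"

definition covered ::
  "'a set \<Rightarrow> nat \<Rightarrow> nat \<Rightarrow> (nat \<Rightarrow> 'a set) \<Rightarrow> nat \<Rightarrow> ('a \<times> nat) set \<Rightarrow> (nat \<Rightarrow> 'a \<Rightarrow> 'a set) \<Rightarrow> 'a set"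
  where
  "covered V mu nu I l S Xs = {v\<in>V. v \<notin> (\<Union>j\<in>{..<l}. Vj V mu Xs I j) \<and>
     (nreach V mu Xs (seeds_with I S) v = 0 \<or> nreach V mu Xs (seeds_with I S) v \<ge> nu)}"

lemma phi_outcome_eq_card_covered:
  "phi_outcome V mu nu I l S Xs = card (covered V mu nu I l S Xs)"
  unfolding phi_outcome_def covered_def ..

text \<open>For \<open>l \<ge> 1\<close> the alternative ``reached by no campaign'' in \<open>\<Phi>\<^sup>\<ge>\<^sup>l\<close> never applies.\<close>

lemma covered_iff:
  assumes "1 \<le> l"
  shows "v \<in> covered V mu nu I l S Xs \<longleftrightarrow>
    v \<in> V \<and> l \<le> nreach V mu Xs I v \<and> nu \<le> nreach V mu Xs (seeds_with I S) v"
proof -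
  have "nreach V mu Xs I v \<le> nreach V mu Xs (seeds_with I S) v"
    by (rule nreach_mono) auto
  moreover have "v \<notin> (\<Union>j\<in>{..<l}. Vj V mu Xs I j) \<longleftrightarrow> l \<le> nreach V mu Xs I v" if "v \<in> V"
    using that unfolding Vj_def by auto
  ultimately show ?thesis using assms unfolding covered_def by auto
qed

lemma covered_mono:
  assumes "1 \<le> l" and "S \<subseteq> S'"
  shows "covered V mu nu I l S Xs \<subseteq> covered V mu nu I l S' Xs"
proof
  fix v assume "v \<in> covered V mu nu I l S Xs"
  moreover have "nreach V mu Xs (seeds_with I S) v \<le> nreach V mu Xs (seeds_with I S') v"
    by (rule nreach_mono) (use assms(2) in \<open>auto simp: slice_def\<close>)
  ultimately show "v \<in> covered V mu nu I l S' Xs"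
    unfolding covered_iff[OF assms(1)] by linarith
qed

lemma finite_covered: "finite V \<Longrightarrow> finite (covered V mu nu I l S Xs)"
  unfolding covered_def by simp

lemma exists_witness_seeds:
  assumes "finite R" and "\<forall>i\<in>R. v \<in> reach V (Xs i) (slice So i)"
  shows "\<exists>t\<subseteq>So. card t \<le> card R \<and> (\<forall>i\<in>R. v \<in> reach V (Xs i) (slice t i))"
proof -
  have "\<forall>i\<in>R. \<exists>a. (a, i) \<in> So \<and> v \<in> reach V (Xs i) {a}"
    using assms(2) unfolding reach_def slice_def by auto
  then obtain g where g: "\<forall>i\<in>R. (g i, i) \<in> So \<and> v \<in> reach V (Xs i) {g i}"
    by metis
  define t where "t = (\<lambda>i. (g i, i)) ` R"
  have "v \<in> reach V (Xs i) (slice t i)" if "i \<in> R" for i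
    using g that reach_mono[of "{g i}" "slice t i"] unfolding t_def slice_def by blast
  moreover have "t \<subseteq> So" "card t \<le> card R"
    using g card_image_le[OF assms(1)] unfolding t_def by auto
  ultimately show ?thesis by blast
qed

lemma exists_seed_subset_nreach_ge:
  assumes So: "finite So" "n \<le> card So"
    and few: "nu \<le> nreach V mu Xs I v + n"
    and many: "nu \<le> nreach V mu Xs (seeds_with I So) v"
  shows "\<exists>\<tau>\<subseteq>So. card \<tau> = n \<and> nu \<le> nreach V mu Xs (seeds_with I \<tau>) v"
proof -
  define R0 where "R0 = reaching_campaigns V mu Xs I v"
  define R where "R = reaching_campaigns V mu Xs (seeds_with I So) v"
  have fin: "finite R0" "finite R" unfolding R0_def R_def reaching_campaigns_def by auto
  have "R0 \<subseteq> R" unfolding R0_def R_def by (rule reaching_campaigns_mono) auto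
  txt \<open>Whichever argument of \<open>min\<close> is smaller, \<open>R0 \<union> R'\<close> has at least \<open>nu\<close> elements.\<close>
  have "min n (card (R - R0)) \<le> card (R - R0)" by simp
  then obtain R' where R': "R' \<subseteq> R - R0" "card R' = min n (card (R - R0))" "finite R'"
    by (rule obtain_subset_with_card_n)
  have "\<forall>i\<in>R'. v \<in> reach V (Xs i) (slice So i)"
    using R'(1) unfolding R0_def R_def reaching_campaigns_def reach_Un by auto
  from exists_witness_seeds[OF \<open>finite R'\<close> this] obtain t
    where t: "t \<subseteq> So" "card t \<le> card R'" "\<forall>i\<in>R'. v \<in> reach V (Xs i) (slice t i)"
    by blast
  from t(2) R'(2) have "card t \<le> n" by simp
  then obtain \<tau> where \<tau>: "t \<subseteq> \<tau>" "\<tau> \<subseteq> So" "card \<tau> = n"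
    using exists_subset_between[of t n So] t(1) So by blast
  define R'' where "R'' = reaching_campaigns V mu Xs (seeds_with I \<tau>) v"
  have "R0 \<subseteq> R''" unfolding R0_def R''_def by (rule reaching_campaigns_mono) auto
  moreover have "R' \<subseteq> R''"
  proof
    fix i assume i: "i \<in> R'"
    have "slice t i \<subseteq> I i \<union> slice \<tau> i" using \<tau>(1) unfolding slice_def by auto
    with i t(3) have "v \<in> reach V (Xs i) (I i \<union> slice \<tau> i)" using reach_mono by blast
    with i R'(1) show "i \<in> R''" unfolding R''_def R_def reaching_campaigns_def by auto
  qed
  moreover have "finite R''" unfolding R''_def reaching_campaigns_def by simp
  ultimately have "card (R0 \<union> R') \<le> card R''" by (intro card_mono) auto
  moreover have "card (R0 \<union> R') = card R0 + card R'"
    using R'(1,3) fin by (intro card_Un_disjoint) auto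
  moreover have "card (R - R0) = card R - card R0" using fin(1) \<open>R0 \<subseteq> R\<close> by (rule card_Diff_subset)
  moreover have "nu \<le> card R0 + n" "nu \<le> card R"
    using few many unfolding R0_def R_def nreach_eq_card_reaching_campaigns .
  ultimately have "nu \<le> card R''" using R'(2) by linarith
  with \<tau> show ?thesis unfolding R''_def nreach_eq_card_reaching_campaigns by blast
qed

lemma exists_seed_subset_covered:
  assumes l: "1 \<le> l" and So: "finite So" "nu - l \<le> card So"
    and v: "v \<in> covered V mu nu I l So Xs"
  shows "\<exists>\<tau>\<subseteq>So. card \<tau> = nu - l \<and> v \<in> covered V mu nu I l \<tau> Xs"
proof -
  from v have "v \<in> V" and old: "l \<le> nreach V mu Xs I v"
    and many: "nu \<le> nreach V mu Xs (seeds_with I So) v"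
    unfolding covered_iff[OF l] by auto
  from old have "nu \<le> nreach V mu Xs I v + (nu - l)" by arith
  from exists_seed_subset_nreach_ge[OF So this many] obtain \<tau>
    where "\<tau> \<subseteq> So" "card \<tau> = nu - l" "nu \<le> nreach V mu Xs (seeds_with I \<tau>) v"
    by blast
  with \<open>v \<in> V\<close> old show ?thesis unfolding covered_iff[OF l] by blast
qed

lemma card_gain_le_sum_gains:
  assumes "finite T" "finite B" "\<And>t. t \<in> T \<Longrightarrow> finite (F t)" "\<And>t. t \<in> T \<Longrightarrow> B \<subseteq> F t"
    and "A \<subseteq> B \<union> (\<Union>t\<in>T. F t)"
  shows "real (card A) - real (card B) \<le> (\<Sum>t\<in>T. real (card (F t)) - real (card B))"
proof -
  have "A \<subseteq> B \<union> (\<Union>t\<in>T. F t - B)" using assms(5) by blast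
  then have "card A \<le> card (B \<union> (\<Union>t\<in>T. F t - B))"
    using assms(1-3) by (intro card_mono) auto
  also have "\<dots> \<le> card B + (\<Sum>t\<in>T. card (F t - B))"
    using card_Un_le[of B "\<Union>t\<in>T. F t - B"] card_UN_le[OF assms(1), of "\<lambda>t. F t - B"] by linarith
  finally have "real (card A) \<le> real (card B) + (\<Sum>t\<in>T. real (card (F t - B)))"
    unfolding of_nat_sum[symmetric] of_nat_add[symmetric] of_nat_le_iff .
  moreover have "(\<Sum>t\<in>T. real (card (F t - B))) = (\<Sum>t\<in>T. real (card (F t)) - real (card B))"
  proof (rule sum.cong)
    fix t assume "t \<in> T"
    with assms(2-4) show "real (card (F t - B)) = real (card (F t)) - real (card B)"
      by (simp add: card_Diff_subset card_mono of_nat_diff)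
  qed simp
  ultimately show ?thesis by linarith
qed

lemma card_covered_gain_le_sum:
  assumes l: "1 \<le> l" and "finite V" and So: "finite So" "nu - l \<le> card So"
  shows "real (card (covered V mu nu I l So Xs)) - real (card (covered V mu nu I l S Xs))
    \<le> (\<Sum>\<tau>\<in>{\<tau>. \<tau> \<subseteq> So \<and> card \<tau> = nu - l}.
         real (card (covered V mu nu I l (S \<union> \<tau>) Xs)) - real (card (covered V mu nu I l S Xs)))"
proof (rule card_gain_le_sum_gains[where F = "\<lambda>\<tau>. covered V mu nu I l (S \<union> \<tau>) Xs"])
  show "finite {\<tau>. \<tau> \<subseteq> So \<and> card \<tau> = nu - l}"
    by (rule finite_subset[of _ "Pow So"]) (auto simp: So(1))
  show "covered V mu nu I l So Xs \<subseteq> covered V mu nu I l S Xs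
    \<union> (\<Union>\<tau>\<in>{\<tau>. \<tau> \<subseteq> So \<and> card \<tau> = nu - l}. covered V mu nu I l (S \<union> \<tau>) Xs)"
  proof
    fix v assume "v \<in> covered V mu nu I l So Xs"
    from exists_seed_subset_covered[OF l So this] obtain \<tau>
      where "\<tau> \<subseteq> So" "card \<tau> = nu - l" "v \<in> covered V mu nu I l \<tau> Xs"
      by blast
    moreover have "covered V mu nu I l \<tau> Xs \<subseteq> covered V mu nu I l (S \<union> \<tau>) Xs"
      using l by (rule covered_mono) blast
    ultimately show "v \<in> covered V mu nu I l S Xs
      \<union> (\<Union>\<tau>\<in>{\<tau>. \<tau> \<subseteq> So \<and> card \<tau> = nu - l}. covered V mu nu I l (S \<union> \<tau>) Xs)"
      by blast
  qed
  show "finite (covered V mu nu I l S Xs)" "finite (covered V mu nu I l (S \<union> \<tau>) Xs)" for \<tau>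
    using \<open>finite V\<close> by (rule finite_covered)+
  show "covered V mu nu I l S Xs \<subseteq> covered V mu nu I l (S \<union> \<tau>) Xs" for \<tau>
    using l by (rule covered_mono) blast
qed

lemma Phi_ge_eq_expectation:
  "Phi_ge corr V E mu nu p I l S
     = expect_profile corr V E mu p (\<lambda>Xs. real (card (covered V mu nu I l S Xs)))"
  unfolding Phi_ge_def phi_outcome_eq_card_covered ..

lemma BAL_instance_expect_profile_mono:
  assumes "BAL_instance corr mu nu V E p I k" and "\<And>Xs. f Xs \<le> g Xs"
  shows "expect_profile corr V E mu p f \<le> expect_profile corr V E mu p g"
  using assms(1) by (intro expect_profile_mono assms(2)) (auto simp: BAL_instance_def)

lemma Phi_ge_mono:
  assumes inst: "BAL_instance corr mu nu V E p I k" and "1 \<le> l" "S \<subseteq> S'"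
  shows "Phi_ge corr V E mu nu p I l S \<le> Phi_ge corr V E mu nu p I l S'"
proof -
  from inst have "finite V" unfolding BAL_instance_def by simp
  have "real (card (covered V mu nu I l S Xs)) \<le> real (card (covered V mu nu I l S' Xs))" for Xs
    using finite_covered[OF \<open>finite V\<close>] covered_mono[OF assms(2,3)] by (simp add: card_mono)
  then show ?thesis
    unfolding Phi_ge_eq_expectation by (rule BAL_instance_expect_profile_mono[OF inst])
qed

lemma Phi_ge_gain_le_sum:
  assumes inst: "BAL_instance corr mu nu V E p I k" and "1 \<le> l" "finite So" "nu - l \<le> card So"
  shows "Phi_ge corr V E mu nu p I l So - Phi_ge corr V E mu nu p I l S
    \<le> (\<Sum>\<tau>\<in>{\<tau>. \<tau> \<subseteq> So \<and> card \<tau> = nu - l}.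
         Phi_ge corr V E mu nu p I l (S \<union> \<tau>) - Phi_ge corr V E mu nu p I l S)"
proof -
  from inst have "finite V" unfolding BAL_instance_def by simp
  note pointwise = card_covered_gain_le_sum[OF assms(2) this assms(3,4)]
  show ?thesis
    unfolding Phi_ge_eq_expectation expect_profile_diff[symmetric] expect_profile_sum[symmetric]
    using pointwise by (rule BAL_instance_expect_profile_mono[OF inst])
qed

theorem mainTheorem5:
  fixes corr :: bool and mu nu k l :: nat and V :: "'a set" and E :: "('a \<times> 'a) set"
    and p :: "nat \<Rightarrow> 'a \<times> 'a \<Rightarrow> real" and I :: "nat \<Rightarrow> 'a set"
    and S tau_star S_opt :: "('a \<times> nat) set"
  assumes inst: "BAL_instance corr mu nu V E p I k"
    and l: "1 \<le> l" "l \<le> nu - 1"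
    and S: "S \<subseteq> Vhat V mu" "card S \<le> k - (nu - l)"
    and tau_mem: "tau_star \<subseteq> Vhat V mu" "card tau_star = nu - l"
    and tau_max: "\<forall>tau. tau \<subseteq> Vhat V mu \<and> card tau = nu - l \<longrightarrow>
                    Phi_ge corr V E mu nu p I l (S \<union> tau) \<le> Phi_ge corr V E mu nu p I l (S \<union> tau_star)"
    and opt_mem: "S_opt \<subseteq> Vhat V mu" "card S_opt = k"
    and opt_max: "\<forall>S'. S' \<subseteq> Vhat V mu \<and> card S' = k \<longrightarrow>
                    Phi_ge corr V E mu nu p I l S' \<le> Phi_ge corr V E mu nu p I l S_opt"
  shows "Phi_ge corr V E mu nu p I l (S \<union> tau_star) - Phi_ge corr V E mu nu p I l S
           \<ge> (Phi_ge corr V E mu nu p I l S_opt - Phi_ge corr V E mu nu p I l S) / real (k choose (nu - l))"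
proof (cases "nu - l \<le> k")
  case True
  define \<Phi> where "\<Phi> = Phi_ge corr V E mu nu p I l"
  define T where "T = {\<tau>. \<tau> \<subseteq> S_opt \<and> card \<tau> = nu - l}"
  from inst have "2 \<le> k" unfolding BAL_instance_def by simp
  with opt_mem(2) have "finite S_opt" by (intro card_ge_0_finite) simp
  have "\<Phi> S_opt - \<Phi> S \<le> (\<Sum>\<tau>\<in>T. \<Phi> (S \<union> \<tau>) - \<Phi> S)"
    unfolding \<Phi>_def T_def
    using Phi_ge_gain_le_sum[OF inst l(1) \<open>finite S_opt\<close>] True opt_mem by simp
  also have "\<dots> \<le> real (card T) * (\<Phi> (S \<union> tau_star) - \<Phi> S)"
  proof (rule sum_bounded_above)
    fix \<tau> assume "\<tau> \<in> T"
    with opt_mem(1) have "\<tau> \<subseteq> Vhat V mu" "card \<tau> = nu - l" unfolding T_def by auto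
    with tau_max show "\<Phi> (S \<union> \<tau>) - \<Phi> S \<le> \<Phi> (S \<union> tau_star) - \<Phi> S" unfolding \<Phi>_def by simp
  qed
  also have "card T = k choose (nu - l)"
    unfolding T_def using n_subsets[OF \<open>finite S_opt\<close>] opt_mem by simp
  finally show ?thesis
    using True unfolding \<Phi>_def by (simp add: pos_divide_le_eq mult.commute)
next
  case False
  then have "k choose (nu - l) = 0" by (simp add: binomial_eq_0)
  then show ?thesis using Phi_ge_mono[OF inst l(1), of S "S \<union> tau_star"] by (simp only:) simp
qed

end
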